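(* Let $\kappa$ be an infinite cardinal. If a graph $G$ is $\kappa$-connected, then $G$ contains a subdivision of $K_\kappa$.
   Context: A graph is a pair $(V,E)$ with $E\subseteq[V]^2$. A graph is $\kappa$-connected if it stays connected after removing any set of fewer than $\kappa$ vertices. $K_\kappa$ is the complete graph on $\kappa$ vertices. A graph $H$ is a subdivision of $K$ if $H$ is obtained from $K$ by replacing edges with paths (internally disjoint paths whose interior vertices are new); $G$ contains a subdivision of $K_\kappa$ if some subgraph of $G$ is such a subdivision. *)

theory Defs
  imports Main
begin

definition graph :: "'a set \<Rightarrow> 'a set set \<Rightarrow> bool" where
  "graph V E \<longleftrightarrow> (\<forall>e\<in>E. e \<subseteq> V \<and> card e = 2)"

definition is_path :: "'a set \<Rightarrow> 'a set set \<Rightarrow> 'a list \<Rightarrow> bool" where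
  "is_path V E p \<longleftrightarrow> p \<noteq> [] \<and> distinct p \<and> set p \<subseteq> V \<and>
     (\<forall>i. Suc i < length p \<longrightarrow> {p ! i, p ! Suc i} \<in> E)"

definition del_vertices :: "'a set \<Rightarrow> 'a set set \<Rightarrow> 'a set \<Rightarrow> 'a set \<times> 'a set set" where
  "del_vertices V E X = (V - X, {e \<in> E. e \<inter> X = {}})"

definition connected_graph :: "'a set \<Rightarrow> 'a set set \<Rightarrow> bool" where
  "connected_graph V E \<longleftrightarrow> V \<noteq> {} \<and>
     (\<forall>u\<in>V. \<forall>v\<in>V. \<exists>p. is_path V E p \<and> hd p = u \<and> last p = v)"

text \<open>kappa-connected, where kappa = |K| is given by a set K: removing any set of
  fewer than kappa vertices leaves a connected graph.\<close>
definition kappa_connected :: "'k set \<Rightarrow> 'a set \<Rightarrow> 'a set set \<Rightarrow> bool" where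
  "kappa_connected K V E \<longleftrightarrow>
     (\<forall>X. X \<subseteq> V \<longrightarrow> ordLess2 (card_of X) (card_of K) \<longrightarrow>
        connected_graph (fst (del_vertices V E X)) (snd (del_vertices V E X)))"

abbreviation interior :: "'a list \<Rightarrow> 'a set" where
  "interior p \<equiv> set (butlast (tl p))"

definition contains_TK :: "'k set \<Rightarrow> 'a set \<Rightarrow> 'a set set \<Rightarrow> bool" where
  "contains_TK K V E \<longleftrightarrow>
     (\<exists>f P. inj_on f K \<and> f ` K \<subseteq> V \<and>
        (\<forall>i\<in>K. \<forall>j\<in>K. i \<noteq> j \<longrightarrow>
            is_path V E (P {i,j}) \<and> {hd (P {i,j}), last (P {i,j})} = {f i, f j} \<and>
            interior (P {i,j}) \<inter> f ` K = {}) \<and>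
        (\<forall>i\<in>K. \<forall>j\<in>K. \<forall>i'\<in>K. \<forall>j'\<in>K. i \<noteq> j \<longrightarrow> i' \<noteq> j' \<longrightarrow> {i,j} \<noteq> {i',j'} \<longrightarrow>
            interior (P {i,j}) \<inter> interior (P {i',j'}) = {}))"

end

theory Submission
  imports Defs
begin

text \<open>Well-order K by its initial ordinal \<kappa>, so that every element has fewer than \<kappa>
  predecessors, and choose the branch vertices by transfinite recursion along this order. At
  stage i fewer than \<kappa> vertices are in use: the earlier branch vertices and the earlier
  paths, which are finite and fewer than \<kappa> because \<lambda>\<cdot>\<lambda> < \<kappa> for \<lambda> < \<kappa> when \<kappa> is infinite.
  Removing them leaves the graph connected, so an unused branch vertex exists, and it can be
  joined to the earlier branch vertices one path at a time, each path avoiding the fewer than \<kappa>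
  vertices used so far. Hence the interiors are disjoint from each other and from all branch
  vertices.\<close>

unbundle cardinal_syntax

text \<open>The relation \<^term>\<open>card_of K\<close> is a well-order of K of least order type, so its
  proper initial segments are smaller than K.\<close>
abbreviation predecessors :: "'k set \<Rightarrow> 'k \<Rightarrow> 'k set" where
  "predecessors K i \<equiv> underS (card_of K) i"

lemma finite_card_of_ordLess_infinite: "finite A \<Longrightarrow> infinite K \<Longrightarrow> |A| <o |K|"
  by (metis Field_card_of card_of_Well_order finite_ordLess_infinite)

lemma UN_finite_ordLess_infinite:
  assumes "infinite K" "|I| <o |K|" "\<And>i. i \<in> I \<Longrightarrow> finite (A i)"
  shows "|\<Union>i\<in>I. A i| <o |K|"
proof (cases "finite I")
  case True
  then show ?thesis
    using assms by (simp add: finite_card_of_ordLess_infinite)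
next
  case False
  have "|\<Union>i\<in>I. A i| \<le>o |I|"
    using False assms(3) by (intro card_of_UNION_ordLeq_infinite)
      (auto intro: card_of_mono1 ordLess_imp_ordLeq finite_card_of_ordLess_infinite)
  then show ?thesis
    using assms(2) ordLeq_ordLess_trans by blast
qed

lemma Times_ordLess_infinite:
  assumes "infinite K" "|A| <o |K|"
  shows "|A \<times> A| <o |K|"
proof (cases "finite A")
  case True
  then show ?thesis
    using assms(1) by (simp add: finite_card_of_ordLess_infinite)
next
  case False
  then show ?thesis
    using card_of_Times_same_infinite assms(2) ordIso_ordLess_trans by blast
qed

lemma predecessors_ordLess: "infinite K \<Longrightarrow> |predecessors K i| <o |K|"
  using card_of_underS[OF card_of_Card_order, of i K]
  by (cases "i \<in> K") (simp_all add: Field_card_of underS_empty finite_card_of_ordLess_infinite)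

lemma predecessors_subset: "predecessors K i \<subseteq> K"
  using underS_Field[of _ "|K|" i] by (auto simp: Field_card_of)

lemma predecessors_total:
  "i \<in> K \<Longrightarrow> j \<in> K \<Longrightarrow> i \<noteq> j \<Longrightarrow> i \<in> predecessors K j \<or> j \<in> predecessors K i"
  using card_of_well_order_on[of K] unfolding underS_def order_on_defs total_on_def by blast

lemma predecessors_orient:
  assumes "i \<in> K" "j \<in> K" "i \<noteq> j"
  obtains a b where "{i, j} = {a, b}" "a \<in> K" "b \<in> predecessors K a"
  using predecessors_total[OF assms] assms that by (metis insert_commute)

lemma predecessors_asym: "i \<in> predecessors K j \<Longrightarrow> j \<notin> predecessors K i"
  using card_of_well_order_on[of K] unfolding underS_def order_on_defs antisym_def by blast

lemma predecessors_trans: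
  "i \<in> predecessors K j \<Longrightarrow> j \<in> predecessors K k \<Longrightarrow> i \<in> predecessors K k"
  using card_of_well_order_on[of K] unfolding underS_def order_on_defs antisym_def trans_def by blast

lemma interior_subset: "interior p \<subseteq> set p"
  by (cases p) (auto dest: in_set_butlastD)

lemma interior_distinct: "distinct p \<Longrightarrow> interior p = set p - {hd p, last p}"
proof (induction p rule: rev_induct)
  case (snoc x xs)
  then show ?case
    by (cases xs) auto
qed simp

lemma kappa_connected_minus:
  assumes "kappa_connected K V E" "|X| <o |K|"
  shows "connected_graph (V - X) {e \<in> E. e \<inter> (X \<inter> V) = {}}"
proof -
  have "|X \<inter> V| <o |K|"
    using assms(2) card_of_mono1[of "X \<inter> V" X] ordLeq_ordLess_trans by blast
  then have "connected_graph (fst (del_vertices V E (X \<inter> V))) (snd (del_vertices V E (X \<inter> V)))"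
    using assms(1) unfolding kappa_connected_def by blast
  moreover have "V - X \<inter> V = V - X"
    by blast
  ultimately show ?thesis
    by (simp add: del_vertices_def)
qed

lemma kappa_connected_obtain_vertex:
  assumes "kappa_connected K V E" "|X| <o |K|"
  obtains v where "v \<in> V" "v \<notin> X"
  using kappa_connected_minus[OF assms] unfolding connected_graph_def by blast

lemma kappa_connected_path_avoiding:
  assumes "kappa_connected K V E" "|X| <o |K|" "u \<in> V" "v \<in> V"
  obtains p where "is_path V E p" "hd p = u" "last p = v" "interior p \<inter> X = {}"
proof -
  have "|X - {u, v}| <o |K|"
    using assms(2) card_of_mono1[of "X - {u, v}" X] ordLeq_ordLess_trans by blast
  from kappa_connected_minus[OF assms(1) this] assms(3,4)
  obtain p where p: "is_path (V - (X - {u, v})) {e \<in> E. e \<inter> ((X - {u, v}) \<inter> V) = {}} p"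
    "hd p = u" "last p = v"
    unfolding connected_graph_def by blast
  then have "is_path V E p" "set p \<inter> X \<subseteq> {u, v}"
    unfolding is_path_def by auto
  moreover have "interior p = set p - {u, v}"
    using interior_distinct \<open>is_path V E p\<close> p(2,3) unfolding is_path_def by blast
  ultimately show thesis
    using that p(2,3) by blast
qed

lemma kappa_connected_fan:
  fixes V :: "'a set" and I :: "'i set"
  assumes "infinite K" "kappa_connected K V E" "|W| <o |K|" "|I| <o |K|" "v \<in> V" "g ` I \<subseteq> V"
  obtains Q where
    "\<And>i. i \<in> I \<Longrightarrow> is_path V E (Q i) \<and> hd (Q i) = v \<and> last (Q i) = g i \<and> interior (Q i) \<inter> W = {}"
    "\<And>i j. i \<in> I \<Longrightarrow> j \<in> I \<Longrightarrow> i \<noteq> j \<Longrightarrow> interior (Q i) \<inter> interior (Q j) = {}"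
proof -
  define fan_step where "fan_step Q i p \<longleftrightarrow> i \<in> I \<longrightarrow>
      is_path V E p \<and> hd p = v \<and> last p = g i \<and>
      interior p \<inter> (W \<union> (\<Union>j\<in>predecessors I i. set (Q j))) = {}" for Q i p
  have "\<exists>Q. \<forall>i. fan_step Q i (Q i)"
  proof (rule dependent_wf_choice)
    show "wf (card_of I - Id)"
      using card_of_well_order_on[of I] unfolding well_order_on_def by blast
  next
    fix Q Q' :: "'i \<Rightarrow> 'a list" and i p
    assume "\<And>j. (j, i) \<in> card_of I - Id \<Longrightarrow> Q j = Q' j"
    then show "fan_step Q i p = fan_step Q' i p"
      unfolding fan_step_def underS_def by auto
  next
    fix i and Q :: "'i \<Rightarrow> 'a list"
    have "|predecessors I i| <o |K|"
      using ordLeq_ordLess_trans[OF card_of_mono1[OF predecessors_subset] assms(4)] .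
    then have "|W \<union> (\<Union>j\<in>predecessors I i. set (Q j))| <o |K|"
      using assms(1,3) by (simp add: card_of_Un_ordLess_infinite UN_finite_ordLess_infinite)
    then show "\<exists>p. fan_step Q i p"
      using kappa_connected_path_avoiding[OF assms(2) _ assms(5)] assms(6)
      unfolding fan_step_def by (metis image_subset_iff)
  qed
  then obtain Q where Q: "\<And>i. fan_step Q i (Q i)"
    by blast
  show thesis
  proof (rule that)
    fix i assume "i \<in> I"
    then show "is_path V E (Q i) \<and> hd (Q i) = v \<and> last (Q i) = g i \<and> interior (Q i) \<inter> W = {}"
      using Q[of i] unfolding fan_step_def by blast
  next
    have earlier: "interior (Q i) \<inter> interior (Q j) = {}" if "i \<in> I" "j \<in> predecessors I i" for i j
      using Q[of i] that interior_subset[of "Q j"] unfolding fan_step_def by blast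
    fix i j assume "i \<in> I" "j \<in> I" "i \<noteq> j"
    then consider "i \<in> predecessors I j" | "j \<in> predecessors I i"
      using predecessors_total[of i I j] by blast
    then show "interior (Q i) \<inter> interior (Q j) = {}"
      using earlier \<open>i \<in> I\<close> \<open>j \<in> I\<close> by cases blast+
  qed
qed

definition vertices_before :: "'k set \<Rightarrow> ('k \<Rightarrow> 'a) \<Rightarrow> ('k \<Rightarrow> 'k \<Rightarrow> 'a list) \<Rightarrow> 'k \<Rightarrow> 'a set" where
  "vertices_before K f Q i =
     f ` predecessors K i \<union> (\<Union>j\<in>predecessors K i. \<Union>k\<in>predecessors K j. set (Q j k))"

text \<open>The subdivision path of the edge {i, j} is stored as Q i j, where j precedes i.\<close>
definition TK_stage ::
    "'k set \<Rightarrow> 'a set \<Rightarrow> 'a set set \<Rightarrow> ('k \<Rightarrow> 'a) \<Rightarrow> ('k \<Rightarrow> 'k \<Rightarrow> 'a list) \<Rightarrow> 'k \<Rightarrow> bool" where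
  "TK_stage K V E f Q i \<longleftrightarrow>
     f i \<in> V - vertices_before K f Q i \<and>
     (\<forall>j\<in>predecessors K i. is_path V E (Q i j) \<and> hd (Q i j) = f i \<and> last (Q i j) = f j \<and>
        interior (Q i j) \<inter> vertices_before K f Q i = {}) \<and>
     (\<forall>j\<in>predecessors K i. \<forall>k\<in>predecessors K i. j \<noteq> k \<longrightarrow> interior (Q i j) \<inter> interior (Q i k) = {})"

lemma vertices_before_cong:
  "(\<And>j. j \<in> predecessors K i \<Longrightarrow> f' j = f j \<and> Q' j = Q j) \<Longrightarrow>
    vertices_before K f' Q' i = vertices_before K f Q i"
  unfolding vertices_before_def by (simp cong: image_cong SUP_cong)

lemma TK_stage_cong:
  "(\<And>j. j \<in> insert i (predecessors K i) \<Longrightarrow> f' j = f j \<and> Q' j = Q j) \<Longrightarrow>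
    TK_stage K V E f' Q' i = TK_stage K V E f Q i"
  using vertices_before_cong[of K i f' f Q' Q] unfolding TK_stage_def by simp

lemma vertices_before_ordLess:
  assumes "infinite K"
  shows "|vertices_before K f Q i| <o |K|"
proof -
  let ?U = "predecessors K i"
  let ?paths = "\<Union>jk\<in>?U \<times> ?U. set (Q (fst jk) (snd jk))"
  have U: "|?U| <o |K|"
    using assms by (rule predecessors_ordLess)
  have "vertices_before K f Q i \<subseteq> f ` ?U \<union> ?paths"
  proof -
    have "k \<in> ?U" if "j \<in> ?U" "k \<in> predecessors K j" for j k
      using predecessors_trans[OF that(2,1)] .
    then show ?thesis
      unfolding vertices_before_def by fastforce
  qed
  moreover have "|f ` ?U \<union> ?paths| <o |K|"
  proof (rule card_of_Un_ordLess_infinite[OF assms])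
    show "|f ` ?U| <o |K|"
      using ordLeq_ordLess_trans[OF card_of_image U] .
    show "|?paths| <o |K|"
      using Times_ordLess_infinite[OF assms U] by (rule UN_finite_ordLess_infinite[OF assms]) simp
  qed
  ultimately show ?thesis
    using card_of_mono1 ordLeq_ordLess_trans by blast
qed

lemma TK_stage_extend:
  assumes "infinite K" "kappa_connected K V E" "f ` predecessors K i \<subseteq> V"
  obtains v R where "TK_stage K V E (f(i := v)) (Q(i := R)) i"
proof -
  let ?B = "vertices_before K f Q i"
  have B: "|?B| <o |K|"
    using assms(1) by (rule vertices_before_ordLess)
  obtain v where v: "v \<in> V" "v \<notin> ?B"
    using kappa_connected_obtain_vertex[OF assms(2) B] .
  have "|predecessors K i| <o |K|"
    using assms(1) by (rule predecessors_ordLess)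
  then obtain R where
    R: "\<And>j. j \<in> predecessors K i \<Longrightarrow>
          is_path V E (R j) \<and> hd (R j) = v \<and> last (R j) = f j \<and> interior (R j) \<inter> ?B = {}"
      "\<And>j k. j \<in> predecessors K i \<Longrightarrow> k \<in> predecessors K i \<Longrightarrow> j \<noteq> k \<Longrightarrow>
          interior (R j) \<inter> interior (R k) = {}"
    using kappa_connected_fan[OF assms(1,2) B _ v(1) assms(3)] by blast
  have "vertices_before K (f(i := v)) (Q(i := R)) i = ?B"
    by (rule vertices_before_cong) (auto simp: underS_def)
  then show thesis
    using that[of v R] v R unfolding TK_stage_def by (simp add: underS_def)
qed

lemma TK_stages_exist:
  fixes K :: "'k set" and V :: "'a set"
  assumes "infinite K" "kappa_connected K V E"
  obtains f Q where "\<And>i. TK_stage K V E f Q i"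
proof -
  \<comment> \<open>The value r chosen at i packs the branch vertex f i with the paths Q i.\<close>
  define stage where "stage h i r \<longleftrightarrow> TK_stage K V E (fst \<circ> h(i := r)) (snd \<circ> h(i := r)) i"
    for h :: "'k \<Rightarrow> 'a \<times> ('k \<Rightarrow> 'a list)" and i r
  have "\<exists>h. \<forall>i. stage h i (h i)"
  proof (rule dependent_wf_choice)
    show "wf (card_of K - Id)"
      using card_of_well_order_on[of K] unfolding well_order_on_def by blast
  next
    fix h h' :: "'k \<Rightarrow> 'a \<times> ('k \<Rightarrow> 'a list)" and i r
    assume "\<And>j. (j, i) \<in> card_of K - Id \<Longrightarrow> h j = h' j"
    then show "stage h i r = stage h' i r"
      unfolding stage_def by (intro TK_stage_cong) (auto simp: underS_def)
  next
    fix i and h :: "'k \<Rightarrow> 'a \<times> ('k \<Rightarrow> 'a list)"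
    assume "\<And>j. (j, i) \<in> card_of K - Id \<Longrightarrow> stage h j (h j)"
    then have "(fst \<circ> h) ` predecessors K i \<subseteq> V"
      unfolding stage_def TK_stage_def underS_def by auto
    then obtain v R where "TK_stage K V E ((fst \<circ> h)(i := v)) ((snd \<circ> h)(i := R)) i"
      using TK_stage_extend[OF assms] by blast
    then show "\<exists>r. stage h i r"
      unfolding stage_def by (intro exI[of _ "(v, R)"]) (simp add: fun_upd_comp)
  qed
  then obtain h where "\<And>i. stage h i (h i)"
    by blast
  then show thesis
    using that[of "fst \<circ> h" "snd \<circ> h"] unfolding stage_def by simp
qed

definition edge_path :: "'k set \<Rightarrow> ('k \<Rightarrow> 'k \<Rightarrow> 'a list) \<Rightarrow> 'k set \<Rightarrow> 'a list" where
  "edge_path K Q e = (SOME p. \<exists>i j. e = {i, j} \<and> j \<in> predecessors K i \<and> p = Q i j)"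

lemma edge_path_eq: "j \<in> predecessors K i \<Longrightarrow> edge_path K Q {i, j} = Q i j"
  unfolding edge_path_def
proof (rule someI2)
  assume "j \<in> predecessors K i"
  then show "\<exists>i' j'. {i, j} = {i', j'} \<and> j' \<in> predecessors K i' \<and> Q i j = Q i' j'"
    by blast
next
  fix p assume "j \<in> predecessors K i" "\<exists>i' j'. {i, j} = {i', j'} \<and> j' \<in> predecessors K i' \<and> p = Q i' j'"
  then show "p = Q i j"
    using predecessors_asym[of j K i] underS_notIn by (auto simp: doubleton_eq_iff)
qed

context
  fixes K :: "'k set" and V :: "'a set" and E :: "'a set set"
    and f :: "'k \<Rightarrow> 'a" and Q :: "'k \<Rightarrow> 'k \<Rightarrow> 'a list"
  assumes stages: "\<And>i. i \<in> K \<Longrightarrow> TK_stage K V E f Q i"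
begin

private lemma stage_path:
  assumes "i \<in> K" "j \<in> predecessors K i"
  shows "is_path V E (Q i j)" "hd (Q i j) = f i" "last (Q i j) = f j"
    and "interior (Q i j) \<inter> vertices_before K f Q i = {}"
  using stages[OF assms(1)] assms(2) unfolding TK_stage_def by auto

private lemma stage_vertex:
  assumes "i \<in> K"
  shows "f i \<in> V" "f i \<notin> vertices_before K f Q i"
  using stages[OF assms] unfolding TK_stage_def by auto

private lemma stage_disjoint:
  assumes "i \<in> K" "j \<in> predecessors K i" "k \<in> predecessors K i" "j \<noteq> k"
  shows "interior (Q i j) \<inter> interior (Q i k) = {}"
  using stages[OF assms(1)] assms(2-4) unfolding TK_stage_def by auto

private lemma vertices_before_memI:
  "j \<in> predecessors K i \<Longrightarrow> f j \<in> vertices_before K f Q i"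
  "j \<in> predecessors K i \<Longrightarrow> k \<in> predecessors K j \<Longrightarrow> set (Q j k) \<subseteq> vertices_before K f Q i"
  unfolding vertices_before_def by auto

lemma TK_stages_path_avoids_branch_vertices:
  assumes "a \<in> K" "b \<in> predecessors K a"
  shows "interior (Q a b) \<inter> f ` K = {}"
proof -
  have "f k \<notin> interior (Q a b)" if k: "k \<in> K" for k
  proof -
    consider "k = a" | "k \<in> predecessors K a" | "a \<in> predecessors K k"
      using predecessors_total[OF k assms(1)] by blast
    then show ?thesis
    proof cases
      case 1
      have "distinct (Q a b)"
        using stage_path(1)[OF assms] unfolding is_path_def by blast
      then show ?thesis
        using interior_distinct[of "Q a b"] stage_path(2)[OF assms] 1 by simp
    next
      case 2
      then show ?thesis
        using stage_path(4)[OF assms] vertices_before_memI(1)[OF 2] by blast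
    next
      case 3
      then show ?thesis
        using vertices_before_memI(2)[OF 3 assms(2)] stage_vertex(2)[OF k] interior_subset[of "Q a b"]
        by blast
    qed
  qed
  then show ?thesis
    by blast
qed

lemma TK_stages_interiors_disjoint:
  assumes "a \<in> K" "b \<in> predecessors K a" "a' \<in> K" "b' \<in> predecessors K a'" "{a, b} \<noteq> {a', b'}"
  shows "interior (Q a b) \<inter> interior (Q a' b') = {}"
proof -
  have earlier: "interior (Q a b) \<inter> interior (Q a' b') = {}"
    if "a \<in> predecessors K a'" "b \<in> predecessors K a" "a' \<in> K" "b' \<in> predecessors K a'" for a b a' b'
    using vertices_before_memI(2)[OF that(1,2)] stage_path(4)[OF that(3,4)] interior_subset[of "Q a b"]
    by blast
  consider "a = a'" | "a \<in> predecessors K a'" | "a' \<in> predecessors K a"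
    using predecessors_total[OF assms(1,3)] by blast
  then show ?thesis
  proof cases
    case 1
    with assms(5) have "b \<noteq> b'"
      by blast
    then show ?thesis
      using stage_disjoint[OF assms(1,2)] assms(4) 1 by blast
  next
    case 2
    show ?thesis
      using earlier[OF 2 assms(2,3,4)] .
  next
    case 3
    show ?thesis
      using earlier[OF 3 assms(4,1,2)] by blast
  qed
qed

lemma contains_TK_if_TK_stages: "contains_TK K V E"
  unfolding contains_TK_def
proof (intro exI conjI ballI impI)
  show "inj_on f K"
  proof (rule inj_onI, rule ccontr)
    fix i j assume ij: "i \<in> K" "j \<in> K" "f i = f j" "i \<noteq> j"
    obtain a b where ab: "{i, j} = {a, b}" "a \<in> K" "b \<in> predecessors K a"
      using ij(1,2,4) by (rule predecessors_orient)
    have "f a \<noteq> f b"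
      using stage_vertex(2)[OF ab(2)] vertices_before_memI(1)[OF ab(3)] by metis
    then show False
      using ab(1) ij(3) by (auto simp: doubleton_eq_iff)
  qed
  show "f ` K \<subseteq> V"
    using stage_vertex(1) by blast
next
  fix i j assume "i \<in> K" "j \<in> K" "i \<noteq> j"
  then obtain a b where ab: "{i, j} = {a, b}" "a \<in> K" "b \<in> predecessors K a"
    by (rule predecessors_orient)
  moreover have "{f i, f j} = {f a, f b}"
    using ab(1) by (auto simp: doubleton_eq_iff)
  ultimately show "is_path V E (edge_path K Q {i, j})"
    "{hd (edge_path K Q {i, j}), last (edge_path K Q {i, j})} = {f i, f j}"
    "interior (edge_path K Q {i, j}) \<inter> f ` K = {}"
    using edge_path_eq[OF ab(3), of Q] stage_path[OF ab(2,3)]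
      TK_stages_path_avoids_branch_vertices[OF ab(2,3)] by auto
next
  fix i j i' j'
  assume "i \<in> K" "j \<in> K" "i' \<in> K" "j' \<in> K" "i \<noteq> j" "i' \<noteq> j'" and ne: "{i, j} \<noteq> {i', j'}"
  obtain a b where ab: "{i, j} = {a, b}" "a \<in> K" "b \<in> predecessors K a"
    using \<open>i \<in> K\<close> \<open>j \<in> K\<close> \<open>i \<noteq> j\<close> by (rule predecessors_orient)
  obtain a' b' where ab': "{i', j'} = {a', b'}" "a' \<in> K" "b' \<in> predecessors K a'"
    using \<open>i' \<in> K\<close> \<open>j' \<in> K\<close> \<open>i' \<noteq> j'\<close> by (rule predecessors_orient)
  show "interior (edge_path K Q {i, j}) \<inter> interior (edge_path K Q {i', j'}) = {}"
    using edge_path_eq[OF ab(3), of Q] edge_path_eq[OF ab'(3), of Q] ne ab(1) ab'(1)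
      TK_stages_interiors_disjoint[OF ab(2,3) ab'(2,3)] by simp
qed

end

theorem mainTheorem6:
  fixes K :: "'k set" and V :: "'a set" and E :: "'a set set"
  assumes "infinite K"
    and "graph V E"
    and "kappa_connected K V E"
  shows "contains_TK K V E"
proof -
  obtain f Q where "\<And>i. TK_stage K V E f Q i"
    using TK_stages_exist[OF assms(1,3)] by blast
  then show ?thesis
    by (rule contains_TK_if_TK_stages)
qed


end
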